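(* Let $M$ be a $2$-torsion free $k$-algebra. Let $E$ be the set of idempotent anti-pre-endomorphisms of $M$, i.e. $k$-linear maps $e\colon M\to M$ with $e\circ e=e$ that are anti-pre-morphisms, and let $P$ be the set of pairs $(K,B)$ of $k$-submodules of $M$ such that $M=K\oplus B$ as $k$-modules, $xy-yx\in K$ for all $x,y\in M$, and $bb'=b'b$ for all $b,b'\in B$. Then $e\mapsto(\ker(e),e(M))$ is a bijection $E\to P$ (with inverse sending $(K,B)$ to the projection of $M=K\oplus B$ onto $B$ along $K$, viewed as an endomorphism of $M$).
   Context: $k$ is a commutative ring with identity; a $k$-algebra is a $k$-module with a $k$-bilinear, not necessarily associative, product. $M$ is $2$-torsion free if $x+x=0$ implies $x=0$. A $k$-linear map $\varphi$ is an anti-pre-morphism if $\varphi(xy)+\varphi(x)\varphi(y)=\varphi(yx)+\varphi(y)\varphi(x)$ for all $x,y$. *)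

theory Defs
  imports Main "HOL.Modules"
begin

definition k_algebra :: "('k::comm_ring_1 \<Rightarrow> 'm::ab_group_add \<Rightarrow> 'm) \<Rightarrow> ('m \<Rightarrow> 'm \<Rightarrow> 'm) \<Rightarrow> bool" where
  "k_algebra scale mult \<longleftrightarrow> Modules.module scale \<and>
     (\<forall>x y z. mult (x + y) z = mult x z + mult y z) \<and>
     (\<forall>x y z. mult x (y + z) = mult x y + mult x z) \<and>
     (\<forall>a x y. mult (scale a x) y = scale a (mult x y)) \<and>
     (\<forall>a x y. mult x (scale a y) = scale a (mult x y))"

definition two_torsion_free :: "'m::ab_group_add itself \<Rightarrow> bool" where
  "two_torsion_free _ \<longleftrightarrow> (\<forall>x::'m. x + x = 0 \<longrightarrow> x = 0)"

definition anti_pre_morphism :: "('m \<Rightarrow> 'm \<Rightarrow> 'm::ab_group_add) \<Rightarrow> ('m \<Rightarrow> 'm) \<Rightarrow> bool" where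
  "anti_pre_morphism mult \<phi> \<longleftrightarrow>
     (\<forall>x y. \<phi> (mult x y) + mult (\<phi> x) (\<phi> y) = \<phi> (mult y x) + mult (\<phi> y) (\<phi> x))"

definition idem_anti_pre_endos ::
  "('k::comm_ring_1 \<Rightarrow> 'm::ab_group_add \<Rightarrow> 'm) \<Rightarrow> ('m \<Rightarrow> 'm \<Rightarrow> 'm) \<Rightarrow> ('m \<Rightarrow> 'm) set" where
  "idem_anti_pre_endos scale mult =
     {e. Modules.module_hom scale scale e \<and> e \<circ> e = e \<and> anti_pre_morphism mult e}"

definition ker :: "('m \<Rightarrow> 'm::zero) \<Rightarrow> 'm set" where
  "ker e = {x. e x = 0}"

definition comm_split_pairs ::
  "('k::comm_ring_1 \<Rightarrow> 'm::ab_group_add \<Rightarrow> 'm) \<Rightarrow> ('m \<Rightarrow> 'm \<Rightarrow> 'm) \<Rightarrow> ('m set \<times> 'm set) set" where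
  "comm_split_pairs scale mult =
     {(K, B). Modules.module.subspace scale K \<and> Modules.module.subspace scale B \<and>
        K \<inter> B = {0} \<and> (\<forall>x. \<exists>a\<in>K. \<exists>b\<in>B. x = a + b) \<and>
        (\<forall>x y. mult x y - mult y x \<in> K) \<and>
        (\<forall>b\<in>B. \<forall>b'\<in>B. mult b b' = mult b' b)}"

definition proj_along :: "'m::ab_group_add set \<Rightarrow> 'm set \<Rightarrow> 'm \<Rightarrow> 'm" where
  "proj_along K B x = (THE b. b \<in> B \<and> x - b \<in> K)"

end

theory Submission
  imports Defs
begin

text \<open>
  An idempotent linear map e is the projection of M = ker e \<oplus> e(M) onto e(M).
  For b, b' \<in> e(M) the anti-pre-morphism identity reads e(z) = -z with z = bb' - b'b;
  applying e once more gives e(z) = -e(z), so e(z) = 0 by 2-torsion freeness and hence z = 0.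
  Thus e(M) is commutative, and then the identity says e(xy) = e(yx), i.e. commutators lie
  in ker e. Conversely, if commutators lie in K and B is commutative, both sides of the
  identity for the projection onto B along K split into equal halves.
\<close>

context module
begin

lemma proj_along_eqI:
  assumes "subspace K" "subspace B" "K \<inter> B = {0}" "b \<in> B" "x - b \<in> K"
  shows "proj_along K B x = b"
  unfolding proj_along_def
proof (rule the_equality)
  show "b \<in> B \<and> x - b \<in> K" using assms by simp
  fix b' assume b': "b' \<in> B \<and> x - b' \<in> K"
  have "b' - b \<in> B" using subspace_diff[OF \<open>subspace B\<close>] b' \<open>b \<in> B\<close> by blast
  moreover have "(x - b) - (x - b') \<in> K" using subspace_diff[OF \<open>subspace K\<close>] b' \<open>x - b \<in> K\<close> by blast
  ultimately have "b' - b \<in> K \<inter> B" by simp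
  then show "b' = b" using \<open>K \<inter> B = {0}\<close> by simp
qed

lemma proj_along_mem:
  assumes "subspace K" "subspace B" "K \<inter> B = {0}" "\<forall>x. \<exists>a\<in>K. \<exists>b\<in>B. x = a + b"
  shows "proj_along K B x \<in> B" and "x - proj_along K B x \<in> K"
proof -
  obtain a b where "a \<in> K" "b \<in> B" "x = a + b" using assms(4) by blast
  then have "proj_along K B x = b" using proj_along_eqI[OF assms(1-3)] by simp
  then show "proj_along K B x \<in> B" and "x - proj_along K B x \<in> K"
    using \<open>a \<in> K\<close> \<open>b \<in> B\<close> \<open>x = a + b\<close> by simp_all
qed

lemma
  assumes "subspace K" "subspace B" "K \<inter> B = {0}" "\<forall>x. \<exists>a\<in>K. \<exists>b\<in>B. x = a + b"
  shows module_hom_proj_along: "module_hom scale scale (proj_along K B)"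
    and proj_along_idem: "proj_along K B \<circ> proj_along K B = proj_along K B"
    and ker_proj_along: "ker (proj_along K B) = K"
    and range_proj_along: "range (proj_along K B) = B"
proof -
  let ?p = "proj_along K B"
  note mem = proj_along_mem[OF assms]
  note eqI = proj_along_eqI[OF assms(1-3)]
  show "module_hom scale scale ?p"
  proof (unfold_locales)
    fix x y
    have "x - ?p x + (y - ?p y) \<in> K" using subspace_add[OF assms(1)] mem by blast
    then show "?p (x + y) = ?p x + ?p y"
      using eqI subspace_add[OF assms(2)] mem by (simp add: algebra_simps)
  next
    fix r x
    have "scale r (x - ?p x) \<in> K" using subspace_scale[OF assms(1)] mem by blast
    then show "?p (scale r x) = scale r (?p x)"
      using eqI subspace_scale[OF assms(2)] mem by (simp add: scale_right_diff_distrib)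
  qed
  have fix_B: "?p b = b" if "b \<in> B" for b
    using eqI[OF that] subspace_0[OF assms(1)] by simp
  show "?p \<circ> ?p = ?p" using fix_B mem by auto
  show "ker ?p = K"
  proof
    show "ker ?p \<subseteq> K"
    proof
      fix x assume "x \<in> ker ?p"
      then show "x \<in> K" using mem(2)[of x] by (simp add: ker_def)
    qed
    show "K \<subseteq> ker ?p" using eqI[OF subspace_0[OF assms(2)]] by (auto simp: ker_def)
  qed
  show "range ?p = B"
  proof
    show "range ?p \<subseteq> B" using mem(1) by auto
    show "B \<subseteq> range ?p" using fix_B by (metis rangeI subsetI)
  qed
qed

lemma
  assumes "module_hom scale scale e" "e \<circ> e = e"
  shows subspace_ker_idem: "subspace (ker e)"
    and subspace_range_idem: "subspace (range e)"
    and ker_inter_range_idem: "ker e \<inter> range e = {0}"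
    and ker_plus_range_idem: "\<forall>x. \<exists>a\<in>ker e. \<exists>b\<in>range e. x = a + b"
    and proj_along_ker_range: "proj_along (ker e) (range e) = e"
proof -
  have idem: "e (e x) = e x" for x using assms(2) by (simp add: fun_eq_iff)
  have res_ker: "x - e x \<in> ker e" for x
    using module_hom.diff[OF assms(1)] idem by (simp add: ker_def)
  show "subspace (ker e)" unfolding ker_def by (rule module_hom.subspace_kernel[OF assms(1)])
  show "subspace (range e)" by (rule module_hom.subspace_image[OF assms(1) subspace_UNIV])
  show "ker e \<inter> range e = {0}"
    using idem module_hom.zero[OF assms(1)] by (auto simp: ker_def)
  show "\<forall>x. \<exists>a\<in>ker e. \<exists>b\<in>range e. x = a + b"
    using res_ker by (metis diff_add_cancel rangeI)
  then show "proj_along (ker e) (range e) = e"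
    using proj_along_eqI \<open>subspace (ker e)\<close> \<open>subspace (range e)\<close> \<open>ker e \<inter> range e = {0}\<close> res_ker
    by (auto simp: fun_eq_iff)
qed

end

lemma range_commute_if_anti_pre_morphism:
  fixes e :: "'m::ab_group_add \<Rightarrow> 'm"
  assumes "two_torsion_free TYPE('m)" "anti_pre_morphism mult e" "e \<circ> e = e"
    and diff: "\<And>x y. e (x - y) = e x - e y"
    and "b \<in> range e" "b' \<in> range e"
  shows "mult b b' = mult b' b"
proof -
  have idem: "e (e x) = e x" for x using assms(3) by (simp add: fun_eq_iff)
  have "e b = b" "e b' = b'" using \<open>b \<in> range e\<close> \<open>b' \<in> range e\<close> idem by auto
  define z where "z = mult b b' - mult b' b"
  have "e (mult b b') + mult b b' = e (mult b' b) + mult b' b"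
    using assms(2) \<open>e b = b\<close> \<open>e b' = b'\<close> unfolding anti_pre_morphism_def by metis
  then have ez: "e z = - z"
    unfolding z_def diff by (simp add: algebra_simps)
  have "e (- z) = - e z" using diff[of 0 0] diff[of 0 z] by simp
  then have "e z = - e z" using idem[of z] ez by simp
  then have "e z + e z = 0" by (simp add: eq_neg_iff_add_eq_0)
  then have "e z = 0" using assms(1) unfolding two_torsion_free_def by blast
  then show ?thesis using ez unfolding z_def by simp
qed

lemma commutator_in_ker_if_range_commute:
  assumes "anti_pre_morphism mult e" "\<And>x y. e (x - y) = e x - e y"
    and "\<And>x y. mult (e x) (e y) = mult (e y) (e x)"
  shows "mult x y - mult y x \<in> ker e"
proof -
  have "e (mult x y) = e (mult y x)"
    using assms(1,3) unfolding anti_pre_morphism_def by (metis add_right_cancel)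
  then show ?thesis using assms(2) by (simp add: ker_def)
qed

lemma anti_pre_morphism_if_commutators_in_ker:
  assumes "\<And>x y. e (x - y) = e x - e y" "\<And>x y. mult x y - mult y x \<in> ker e"
    and "\<And>x y. mult (e x) (e y) = mult (e y) (e x)"
  shows "anti_pre_morphism mult e"
  unfolding anti_pre_morphism_def
proof (intro allI)
  fix x y
  have "e (mult x y) - e (mult y x) = 0"
    using assms(1)[of "mult x y" "mult y x"] assms(2)[of x y] by (simp add: ker_def)
  then show "e (mult x y) + mult (e x) (e y) = e (mult y x) + mult (e y) (e x)"
    using assms(3) by simp
qed

lemma proj_along_in_idem_anti_pre_endos:
  assumes "module scale" "(K, B) \<in> comm_split_pairs scale mult"
  shows "proj_along K B \<in> idem_anti_pre_endos scale mult"
    and "(ker (proj_along K B), range (proj_along K B)) = (K, B)"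
proof -
  interpret module scale by fact
  have split: "subspace K" "subspace B" "K \<inter> B = {0}" "\<forall>x. \<exists>a\<in>K. \<exists>b\<in>B. x = a + b"
    and comm: "\<And>x y. mult x y - mult y x \<in> K" "\<forall>b\<in>B. \<forall>b'\<in>B. mult b b' = mult b' b"
    using assms(2) unfolding comm_split_pairs_def by auto
  note hom = module_hom_proj_along[OF split]
  have "anti_pre_morphism mult (proj_along K B)"
    using module_hom.diff[OF hom] comm ker_proj_along[OF split] proj_along_mem(1)[OF split]
    by (intro anti_pre_morphism_if_commutators_in_ker) auto
  then show "proj_along K B \<in> idem_anti_pre_endos scale mult"
    using hom proj_along_idem[OF split] unfolding idem_anti_pre_endos_def by simp
  show "(ker (proj_along K B), range (proj_along K B)) = (K, B)"
    using ker_proj_along[OF split] range_proj_along[OF split] by simp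
qed

lemma ker_range_in_comm_split_pairs:
  fixes e :: "'m::ab_group_add \<Rightarrow> 'm"
  assumes "module scale" "two_torsion_free TYPE('m)" "e \<in> idem_anti_pre_endos scale mult"
  shows "(ker e, range e) \<in> comm_split_pairs scale mult"
    and "proj_along (ker e) (range e) = e"
proof -
  interpret module scale by fact
  have hom: "module_hom scale scale e" and idem: "e \<circ> e = e" and anti: "anti_pre_morphism mult e"
    using assms(3) unfolding idem_anti_pre_endos_def by auto
  have diff: "\<And>x y. e (x - y) = e x - e y" by (rule module_hom.diff[OF hom])
  have range_comm: "\<forall>b\<in>range e. \<forall>b'\<in>range e. mult b b' = mult b' b"
    using range_commute_if_anti_pre_morphism[OF assms(2) anti idem] diff by blast
  have "\<And>x y. mult x y - mult y x \<in> ker e"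
    using commutator_in_ker_if_range_commute[OF anti] diff range_comm by blast
  then show "(ker e, range e) \<in> comm_split_pairs scale mult"
    unfolding comm_split_pairs_def
    using subspace_ker_idem[OF hom idem] subspace_range_idem[OF hom idem]
      ker_inter_range_idem[OF hom idem] ker_plus_range_idem[OF hom idem] range_comm
    by blast
  show "proj_along (ker e) (range e) = e" by (rule proj_along_ker_range[OF hom idem])
qed

theorem theorem5p3:
  fixes scale :: "'k::comm_ring_1 \<Rightarrow> 'm::ab_group_add \<Rightarrow> 'm"
    and mult :: "'m \<Rightarrow> 'm \<Rightarrow> 'm"
  assumes "k_algebra scale mult"
    and "two_torsion_free TYPE('m)"
  shows "bij_betw (\<lambda>e. (ker e, range e))
           (idem_anti_pre_endos scale mult) (comm_split_pairs scale mult)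
       \<and> (\<forall>(K, B) \<in> comm_split_pairs scale mult.
            proj_along K B \<in> idem_anti_pre_endos scale mult
          \<and> (ker (proj_along K B), range (proj_along K B)) = (K, B))"
proof -
  have m: "module scale" using assms(1) unfolding k_algebra_def by simp
  note to_pair = ker_range_in_comm_split_pairs[OF m assms(2)]
  note from_pair = proj_along_in_idem_anti_pre_endos[OF m]
  have "bij_betw (\<lambda>e. (ker e, range e))
          (idem_anti_pre_endos scale mult) (comm_split_pairs scale mult)"
  proof (rule bij_betwI')
    fix e e' assume "e \<in> idem_anti_pre_endos scale mult" "e' \<in> idem_anti_pre_endos scale mult"
    then show "((ker e, range e) = (ker e', range e')) = (e = e')"
      using to_pair(2) by (metis prod.inject)
  next
    fix e assume "e \<in> idem_anti_pre_endos scale mult"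
    then show "(ker e, range e) \<in> comm_split_pairs scale mult" by (rule to_pair(1))
  next
    fix P assume "P \<in> comm_split_pairs scale mult"
    moreover obtain K B where "P = (K, B)" by fastforce
    ultimately show "\<exists>e\<in>idem_anti_pre_endos scale mult. P = (ker e, range e)"
      using from_pair[of K B] by metis
  qed
  then show ?thesis using from_pair by blast
qed

end
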